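(* Let $\alpha=1/2$, $\rho=1$, $\Omega=\mathbb R$, and assume $\inf l=0$, $\sup l=\infty$. Let $a=\int_{-\infty}^{\infty}\sqrt{f_0(y)f_1(y)}\,dy$. The limiting (maximum) robustness parameters $(\epsilon_0,\epsilon_1)$, i.e. those for which the least favorable distributions coincide ($\hat G_0=\hat G_1$ $\mu$-a.e.), satisfy \[ a=\frac{1}{16}\left(16-4\epsilon_1+\epsilon_0(\epsilon_1-4)-\sqrt{(\epsilon_0-8)\,\epsilon_0\,(\epsilon_1-8)\,\epsilon_1}\right). \] In particular, if $\epsilon_0=\epsilon_1=\epsilon$, the maximum robustness parameter is $\epsilon_{\max}=4-2\sqrt{2(1+a)}$.
   Context: $f_0,f_1$ are distinct nominal probability densities on $\mathbb R$, $l=f_1/f_0$. The $\alpha$-divergence is $D(g,f;\alpha)=\frac{1}{\alpha(1-\alpha)}\big(1-\int g^\alpha f^{1-\alpha}dy\big)$ (for $\alpha=1/2$ this is $4$ times the squared Hellinger distance), uncertainty classes are $\mathcal G_i=\{g_i:D(g_i,f_i;\alpha)\le\epsilon_i\}$, and $\hat G_0,\hat G_1$ denote the least favorable distributions of the minimax Bayes test $\min_\delta\sup_{(g_0,g_1)\in\mathcal G_0\times\mathcal G_1}P_E$ with equal priors. *)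

theory Defs
  imports "HOL-Analysis.Analysis"
begin

definition densities :: "(real \<Rightarrow> real) set" where
  "densities = {g. g \<in> borel_measurable lborel \<and> (\<forall>y. 0 \<le> g y)
                 \<and> integrable lborel g \<and> integral\<^sup>L lborel g = 1}"

definition alpha_div :: "(real \<Rightarrow> real) \<Rightarrow> (real \<Rightarrow> real) \<Rightarrow> real \<Rightarrow> real" where
  "alpha_div g f \<alpha> = 1 / (\<alpha> * (1 - \<alpha>)) *
     (1 - (LINT y|lborel. (g y) powr \<alpha> * (f y) powr (1 - \<alpha>)))"

definition unc_class :: "(real \<Rightarrow> real) \<Rightarrow> real \<Rightarrow> real \<Rightarrow> (real \<Rightarrow> real) set" where
  "unc_class f \<alpha> \<epsilon> = {g \<in> densities. alpha_div g f \<alpha> \<le> \<epsilon>}"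

text \<open>Randomized decision rules (probability of deciding for H1).\<close>
definition decision_rules :: "(real \<Rightarrow> real) set" where
  "decision_rules = {\<delta>. \<delta> \<in> borel_measurable lborel \<and> (\<forall>y. 0 \<le> \<delta> y \<and> \<delta> y \<le> 1)}"

definition error_prob :: "(real \<Rightarrow> real) \<Rightarrow> (real \<Rightarrow> real) \<Rightarrow> (real \<Rightarrow> real) \<Rightarrow> real" where
  "error_prob \<delta> g0 g1 = 1/2 * (LINT y|lborel. \<delta> y * g0 y)
                       + 1/2 * (LINT y|lborel. (1 - \<delta> y) * g1 y)"

text \<open>(hg0,hg1) are least favorable distributions of the minimax test
  min_delta sup_{(g0,g1) in G0 x G1} P_E, i.e. together with a minimax rule
  they form a saddle point of P_E.\<close>
definition least_favorable ::
  "(real \<Rightarrow> real) set \<Rightarrow> (real \<Rightarrow> real) set \<Rightarrow> (real \<Rightarrow> real) \<Rightarrow> (real \<Rightarrow> real) \<Rightarrow> bool" where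
  "least_favorable G0 G1 hg0 hg1 \<longleftrightarrow> hg0 \<in> G0 \<and> hg1 \<in> G1 \<and>
     (\<exists>h\<delta> \<in> decision_rules.
        (\<forall>g0\<in>G0. \<forall>g1\<in>G1. error_prob h\<delta> g0 g1 \<le> error_prob h\<delta> hg0 hg1) \<and>
        (\<forall>\<delta>\<in>decision_rules. error_prob h\<delta> hg0 hg1 \<le> error_prob \<delta> hg0 hg1))"

definition lfd_coincide :: "(real \<Rightarrow> real) \<Rightarrow> (real \<Rightarrow> real) \<Rightarrow> real \<Rightarrow> real \<Rightarrow> real \<Rightarrow> bool" where
  "lfd_coincide f0 f1 \<alpha> \<epsilon>0 \<epsilon>1 \<longleftrightarrow>
     (\<exists>hg0 hg1. least_favorable (unc_class f0 \<alpha> \<epsilon>0) (unc_class f1 \<alpha> \<epsilon>1) hg0 hg1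
               \<and> (AE y in lborel. hg0 y = hg1 y))"

definition limiting_params :: "(real \<Rightarrow> real) \<Rightarrow> (real \<Rightarrow> real) \<Rightarrow> real \<Rightarrow> real \<Rightarrow> real \<Rightarrow> bool" where
  "limiting_params f0 f1 \<alpha> \<epsilon>0 \<epsilon>1 \<longleftrightarrow> 0 \<le> \<epsilon>0 \<and> 0 \<le> \<epsilon>1 \<and>
     lfd_coincide f0 f1 \<alpha> \<epsilon>0 \<epsilon>1 \<and>
     (\<forall>e0 e1. 0 \<le> e0 \<and> e0 \<le> \<epsilon>0 \<and> 0 \<le> e1 \<and> e1 \<le> \<epsilon>1 \<and> (e0, e1) \<noteq> (\<epsilon>0, \<epsilon>1)
        \<longrightarrow> \<not> lfd_coincide f0 f1 \<alpha> e0 e1)"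

text \<open>Likelihood ratio l = f1/f0 with values in the extended reals
  (value infinity where f0 = 0 < f1), considered on the support of f0 + f1.\<close>
definition lik_ratio :: "(real \<Rightarrow> real) \<Rightarrow> (real \<Rightarrow> real) \<Rightarrow> real \<Rightarrow> ereal" where
  "lik_ratio f0 f1 y = (if f0 y > 0 then ereal (f1 y / f0 y) else \<infinity>)"

definition supp2 :: "(real \<Rightarrow> real) \<Rightarrow> (real \<Rightarrow> real) \<Rightarrow> real set" where
  "supp2 f0 f1 = {y. f0 y > 0 \<or> f1 y > 0}"

end

theory Submission
  imports Defs
begin

text \<open>For \<open>\<alpha> = 1/2\<close> the divergence is \<open>4 (1 - \<integral>\<surd>(g f))\<close>, so the square roots of densities are
  unit vectors of \<open>L\<^sup>2\<close> and each uncertainty class is a spherical cap of angular radius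
  \<open>arccos (1 - \<epsilon>/4)\<close> around \<open>\<surd>f\<^sub>i\<close>. The least favorable distributions coincide exactly when the two
  caps share a density (then the coin flip is a minimax rule and every test has error \<open>1/2\<close>).
  By the spherical triangle inequality and the great-circle arc between \<open>\<surd>f\<^sub>0\<close> and \<open>\<surd>f\<^sub>1\<close>, this
  happens iff the two radii add up to at least the angle \<open>arccos a\<close>; minimal pairs are those with
  equality, and taking the cosine of that equality gives the formula.\<close>

definition affinity :: "(real \<Rightarrow> real) \<Rightarrow> (real \<Rightarrow> real) \<Rightarrow> real" where
  "affinity g f = (LINT y|lborel. sqrt (g y) * sqrt (f y))"

lemma densitiesD:
  assumes "g \<in> densities"
  shows "g \<in> borel_measurable lborel" "\<And>y. 0 \<le> g y" "integrable lborel g" "integral\<^sup>L lborel g = 1"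
  using assms unfolding densities_def by auto

lemma integrable_sqrt_mult_densities:
  assumes g: "g \<in> densities" and f: "f \<in> densities"
  shows "integrable lborel (\<lambda>y. sqrt (g y) * sqrt (f y))"
proof (rule Bochner_Integration.integrable_bound[where f="\<lambda>y. g y + f y"])
  show "integrable lborel (\<lambda>y. g y + f y)" using densitiesD[OF g] densitiesD[OF f] by auto
  show "(\<lambda>y. sqrt (g y) * sqrt (f y)) \<in> borel_measurable lborel"
    using densitiesD(1)[OF g] densitiesD(1)[OF f] by measurable
  have "sqrt (g y) * sqrt (f y) \<le> g y + f y" for y
  proof -
    have "0 \<le> g y" "0 \<le> f y" using densitiesD(2)[OF g] densitiesD(2)[OF f] by auto
    then show ?thesis using arith_geo_mean_sqrt[of "g y" "f y"] by (simp add: real_sqrt_mult)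
  qed
  then show "AE y in lborel. norm (sqrt (g y) * sqrt (f y)) \<le> norm (g y + f y)"
    using densitiesD(2)[OF g] densitiesD(2)[OF f] by (simp add: add_nonneg_nonneg)
qed

lemma alpha_div_half:
  assumes "g \<in> densities" "f \<in> densities"
  shows "alpha_div g f (1/2) = 4 * (1 - affinity g f)"
proof -
  have "g y powr (1/2) * f y powr (1 - 1/2) = sqrt (g y) * sqrt (f y)" for y
    using densitiesD(2)[OF assms(1)] densitiesD(2)[OF assms(2)] by (simp add: powr_half_sqrt)
  then show ?thesis unfolding alpha_div_def affinity_def by simp
qed

lemma unc_class_half_iff:
  assumes "f \<in> densities"
  shows "g \<in> unc_class f (1/2) \<epsilon> \<longleftrightarrow> g \<in> densities \<and> 1 - \<epsilon>/4 \<le> affinity g f"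
  unfolding unc_class_def using alpha_div_half[OF _ assms] by auto

lemma affinity_nonneg:
  assumes "g \<in> densities" "f \<in> densities"
  shows "0 \<le> affinity g f"
  unfolding affinity_def
  by (rule Bochner_Integration.integral_nonneg) (simp add: densitiesD(2)[OF assms(1)] densitiesD(2)[OF assms(2)])

text \<open>Positive semidefiniteness of the Gram matrix of \<open>\<surd>u, \<surd>v, \<surd>w\<close> in \<open>L\<^sup>2\<close>.\<close>
lemma affinity_quadratic_form_nonneg:
  assumes u: "u \<in> densities" and v: "v \<in> densities" and w: "w \<in> densities"
  shows "0 \<le> p\<^sup>2 + q\<^sup>2 + r\<^sup>2 + 2*p*q * affinity u v + 2*p*r * affinity u w + 2*q*r * affinity v w"
proof -
  note nonneg = densitiesD(2)[OF u] densitiesD(2)[OF v] densitiesD(2)[OF w]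
  have expand: "(p * sqrt (u y) + q * sqrt (v y) + r * sqrt (w y))\<^sup>2 =
     (p\<^sup>2 * u y + q\<^sup>2 * v y) + (r\<^sup>2 * w y + 2*p*q * (sqrt (u y) * sqrt (v y)))
     + (2*p*r * (sqrt (u y) * sqrt (w y)) + 2*q*r * (sqrt (v y) * sqrt (w y)))" for y
    using nonneg by (simp add: power2_eq_square algebra_simps)
  have "0 \<le> (LINT y|lborel. (p * sqrt (u y) + q * sqrt (v y) + r * sqrt (w y))\<^sup>2)"
    by (rule Bochner_Integration.integral_nonneg) auto
  also have "\<dots> = p\<^sup>2 + q\<^sup>2 + r\<^sup>2 + 2*p*q * affinity u v + 2*p*r * affinity u w + 2*q*r * affinity v w"
    unfolding expand affinity_def
    using densitiesD(3,4)[OF u] densitiesD(3,4)[OF v] densitiesD(3,4)[OF w]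
      integrable_sqrt_mult_densities[OF u v] integrable_sqrt_mult_densities[OF u w]
      integrable_sqrt_mult_densities[OF v w]
    by (simp add: integral_add integral_mult_right_zero)
  finally show ?thesis .
qed

lemma affinity_le_1:
  assumes "g \<in> densities" "f \<in> densities"
  shows "affinity g f \<le> 1"
  using affinity_quadratic_form_nonneg[OF assms(1) assms(2) assms(2), of 1 "-1" 0] by simp

lemma affinity_lt_1:
  assumes f0: "f0 \<in> densities" and f1: "f1 \<in> densities"
    and distinct: "\<not> (AE y in lborel. f0 y = f1 y)"
  shows "affinity f0 f1 < 1"
proof (rule ccontr)
  assume "\<not> affinity f0 f1 < 1"
  then have one: "affinity f0 f1 = 1" using affinity_le_1[OF f0 f1] by simp
  have expand: "(sqrt (f0 y) - sqrt (f1 y))\<^sup>2 = f0 y + f1 y - 2 * (sqrt (f0 y) * sqrt (f1 y))" for y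
    using densitiesD(2)[OF f0] densitiesD(2)[OF f1] by (simp add: power2_eq_square algebra_simps)
  note integrable = densitiesD(3)[OF f0] densitiesD(3)[OF f1] integrable_sqrt_mult_densities[OF f0 f1]
  have "integrable lborel (\<lambda>y. (sqrt (f0 y) - sqrt (f1 y))\<^sup>2)"
    unfolding expand using integrable by auto
  moreover have "(LINT y|lborel. (sqrt (f0 y) - sqrt (f1 y))\<^sup>2) = 0"
    unfolding expand using integrable densitiesD(4)[OF f0] densitiesD(4)[OF f1] one
    by (simp add: affinity_def)
  ultimately have "AE y in lborel. f0 y = f1 y"
    by (simp add: integral_nonneg_eq_0_iff_AE)
  with distinct show False ..
qed

lemma affinity_gram_inequality:
  assumes g: "g \<in> densities" and f0: "f0 \<in> densities" and f1: "f1 \<in> densities"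
    and lt1: "affinity f0 f1 < 1"
  shows "(affinity f0 f1 - affinity g f0 * affinity g f1)\<^sup>2
           \<le> (1 - (affinity g f0)\<^sup>2) * (1 - (affinity g f1)\<^sup>2)"
proof -
  define a where "a = affinity f0 f1"
  define c0 where "c0 = affinity g f0"
  define c1 where "c1 = affinity g f1"
  have "0 \<le> (1-a\<^sup>2)\<^sup>2 + (a*c1-c0)\<^sup>2 + (a*c0-c1)\<^sup>2 + 2*(1-a\<^sup>2)*(a*c1-c0)*c0
       + 2*(1-a\<^sup>2)*(a*c0-c1)*c1 + 2*(a*c1-c0)*(a*c0-c1)*a"
    using affinity_quadratic_form_nonneg[OF g f0 f1, of "1-a\<^sup>2" "a*c1-c0" "a*c0-c1"]
    unfolding a_def c0_def c1_def by simp
  also have "\<dots> = (1-a\<^sup>2) * ((1 - c0\<^sup>2) * (1 - c1\<^sup>2) - (a - c0*c1)\<^sup>2)"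
    by (simp add: power2_eq_square algebra_simps)
  finally have "0 \<le> (1-a\<^sup>2) * ((1 - c0\<^sup>2) * (1 - c1\<^sup>2) - (a - c0*c1)\<^sup>2)" .
  moreover have "0 < 1 - a\<^sup>2"
    using lt1 affinity_nonneg[OF f0 f1] unfolding a_def by (simp add: abs_square_less_1)
  ultimately show ?thesis unfolding a_def c0_def c1_def by (simp add: zero_le_mult_iff)
qed

lemma affinity_geodesic_density:
  assumes f0: "f0 \<in> densities" and f1: "f1 \<in> densities" and "0 \<le> p" "0 \<le> q"
    and unit: "p\<^sup>2 + q\<^sup>2 + 2*p*q * affinity f0 f1 = 1"
  defines "g \<equiv> \<lambda>y. (p * sqrt (f0 y) + q * sqrt (f1 y))\<^sup>2"
  shows "g \<in> densities" "affinity g f0 = p + q * affinity f0 f1" "affinity g f1 = p * affinity f0 f1 + q"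
proof -
  note nonneg = densitiesD(2)[OF f0] densitiesD(2)[OF f1]
  note integrable = densitiesD(3)[OF f0] densitiesD(3)[OF f1] integrable_sqrt_mult_densities[OF f0 f1]
  have expand: "g y = p\<^sup>2 * f0 y + q\<^sup>2 * f1 y + 2*p*q * (sqrt (f0 y) * sqrt (f1 y))" for y
    unfolding g_def using nonneg by (simp add: power2_eq_square algebra_simps)
  have sqrt_g: "sqrt (g y) = p * sqrt (f0 y) + q * sqrt (f1 y)" for y
    unfolding g_def using \<open>0 \<le> p\<close> \<open>0 \<le> q\<close> nonneg by simp
  show "g \<in> densities"
    unfolding densities_def
  proof (intro CollectI conjI allI)
    show "g \<in> borel_measurable lborel"
      unfolding g_def using densitiesD(1)[OF f0] densitiesD(1)[OF f1] by measurable
    show "0 \<le> g y" for y unfolding g_def by simp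
    show "integrable lborel g" unfolding expand using integrable by auto
    show "integral\<^sup>L lborel g = 1"
      unfolding expand using integrable densitiesD(4)[OF f0] densitiesD(4)[OF f1] unit
      by (simp add: affinity_def)
  qed
  have "sqrt (g y) * sqrt (f0 y) = p * f0 y + q * (sqrt (f0 y) * sqrt (f1 y))" for y
    unfolding sqrt_g using nonneg by (simp add: algebra_simps)
  then show "affinity g f0 = p + q * affinity f0 f1"
    unfolding affinity_def using integrable densitiesD(4)[OF f0] by (simp add: affinity_def)
  have "sqrt (g y) * sqrt (f1 y) = p * (sqrt (f0 y) * sqrt (f1 y)) + q * f1 y" for y
    unfolding sqrt_g using nonneg by (simp add: algebra_simps)
  then show "affinity g f1 = p * affinity f0 f1 + q"
    unfolding affinity_def using integrable densitiesD(4)[OF f1] by (simp add: affinity_def)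
qed

text \<open>Spherical linear interpolation: the coefficients of the point at angle \<open>t\<close> on the unit
  circle arc spanned by two unit vectors at angle \<open>\<theta>\<close>.\<close>
lemma slerp_coefficients:
  fixes \<theta> t :: real
  assumes "sin \<theta> \<noteq> 0"
  defines "p \<equiv> sin (\<theta> - t) / sin \<theta>" and "q \<equiv> sin t / sin \<theta>"
  shows "p + q * cos \<theta> = cos t" and "p * cos \<theta> + q = cos (\<theta> - t)"
    and "p\<^sup>2 + q\<^sup>2 + 2*p*q * cos \<theta> = 1"
proof -
  show first: "p + q * cos \<theta> = cos t"
    unfolding p_def q_def sin_diff using assms(1) by (simp add: field_simps)
  have "sin (\<theta> - t) * cos \<theta> + sin t
          = sin \<theta> * cos (\<theta> - t) + sin t * (1 - (sin \<theta>)\<^sup>2 - (cos \<theta>)\<^sup>2)"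
    unfolding sin_diff cos_diff by algebra
  then have "sin (\<theta> - t) * cos \<theta> + sin t = sin \<theta> * cos (\<theta> - t)"
    by (simp add: sin_squared_eq)
  then show second: "p * cos \<theta> + q = cos (\<theta> - t)"
    unfolding p_def q_def using assms(1) by (simp add: field_simps)
  have "p\<^sup>2 + q\<^sup>2 + 2*p*q * cos \<theta> = p * (p + q * cos \<theta>) + q * (p * cos \<theta> + q)"
    by (simp add: algebra_simps power2_eq_square)
  also have "\<dots> = p * cos t + q * cos (\<theta> - t)"
    by (simp only: first second)
  also have "\<dots> = (sin (\<theta> - t) * cos t + cos (\<theta> - t) * sin t) / sin \<theta>"
    unfolding p_def q_def using assms(1) by (simp add: field_simps)
  also have "\<dots> = 1"
    using sin_add[of "\<theta> - t" t] assms(1) by simp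
  finally show "p\<^sup>2 + q\<^sup>2 + 2*p*q * cos \<theta> = 1" .
qed

lemma arccos_affinity_bounds:
  assumes "g \<in> densities" "f \<in> densities"
  shows "0 \<le> arccos (affinity g f)" "arccos (affinity g f) \<le> pi/2"
    and "cos (arccos (affinity g f)) = affinity g f"
  using affinity_nonneg[OF assms] affinity_le_1[OF assms]
    arccos_lbound[of "affinity g f"] arccos_le_pi2[of "affinity g f"] by simp_all

lemma arccos_affinity_triangle:
  assumes g: "g \<in> densities" and f0: "f0 \<in> densities" and f1: "f1 \<in> densities"
  shows "arccos (affinity f0 f1) \<le> arccos (affinity g f0) + arccos (affinity g f1)"
proof (cases "affinity f0 f1 = 1")
  case True
  then show ?thesis using arccos_affinity_bounds(1)[OF g f0] arccos_affinity_bounds(1)[OF g f1] by simp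
next
  case False
  define c0 where "c0 = affinity g f0"
  define c1 where "c1 = affinity g f1"
  have "affinity f0 f1 < 1" using False affinity_le_1[OF f0 f1] by simp
  then have "(affinity f0 f1 - c0 * c1)\<^sup>2 \<le> (1 - c0\<^sup>2) * (1 - c1\<^sup>2)"
    using affinity_gram_inequality[OF g f0 f1] unfolding c0_def c1_def by simp
  then have "\<bar>affinity f0 f1 - c0 * c1\<bar> \<le> sqrt (1 - c0\<^sup>2) * sqrt (1 - c1\<^sup>2)"
    using real_sqrt_le_mono by (fastforce simp: real_sqrt_mult)
  moreover have "cos (arccos c0 + arccos c1) = c0 * c1 - sqrt (1 - c0\<^sup>2) * sqrt (1 - c1\<^sup>2)"
    unfolding cos_add c0_def c1_def
    using affinity_nonneg[OF g f0] affinity_le_1[OF g f0] affinity_nonneg[OF g f1] affinity_le_1[OF g f1]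
    by (simp add: sin_arccos)
  ultimately have "cos (arccos c0 + arccos c1) \<le> cos (arccos (affinity f0 f1))"
    using affinity_nonneg[OF f0 f1] affinity_le_1[OF f0 f1] by simp
  then show ?thesis
    using arccos_affinity_bounds[OF f0 f1] arccos_affinity_bounds[OF g f0] arccos_affinity_bounds[OF g f1]
    unfolding c0_def c1_def by (subst (asm) cos_mono_le_eq) auto
qed

lemma error_prob_coin_flip:
  assumes "g0 \<in> densities" "g1 \<in> densities"
  shows "error_prob (\<lambda>_. 1/2) g0 g1 = 1/2"
  using densitiesD(4)[OF assms(1)] densitiesD(4)[OF assms(2)] unfolding error_prob_def by simp

lemma error_prob_diagonal:
  assumes \<delta>: "\<delta> \<in> decision_rules" and g: "g \<in> densities"
  shows "error_prob \<delta> g g = 1/2"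
proof -
  have "\<delta> \<in> borel_measurable lborel" and \<delta>_bounds: "0 \<le> \<delta> y \<and> \<delta> y \<le> 1" for y
    using \<delta> unfolding decision_rules_def by auto
  have "integrable lborel (\<lambda>y. \<delta> y * g y)"
  proof (rule Bochner_Integration.integrable_bound[OF densitiesD(3)[OF g]])
    show "(\<lambda>y. \<delta> y * g y) \<in> borel_measurable lborel"
      using \<open>\<delta> \<in> borel_measurable lborel\<close> densitiesD(1)[OF g] by measurable
    show "AE y in lborel. norm (\<delta> y * g y) \<le> norm (g y)"
      using \<delta>_bounds densitiesD(2)[OF g] by (auto simp: abs_mult mult_left_le_one_le)
  qed
  moreover have "(1 - \<delta> y) * g y = g y - \<delta> y * g y" for y by (simp add: algebra_simps)
  ultimately show ?thesis
    unfolding error_prob_def using densitiesD(3,4)[OF g] by (simp add: field_simps)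
qed

lemma least_favorable_diagonal:
  assumes "G0 \<subseteq> densities" "G1 \<subseteq> densities" "g \<in> G0" "g \<in> G1"
  shows "least_favorable G0 G1 g g"
proof -
  have coin_flip: "(\<lambda>_. 1/2 :: real) \<in> decision_rules" unfolding decision_rules_def by auto
  have "g \<in> densities" using assms by auto
  then show ?thesis
    unfolding least_favorable_def using assms
    by (intro conjI bexI[OF _ coin_flip])
       (auto simp: error_prob_coin_flip error_prob_diagonal subset_iff)
qed

lemma alpha_div_cong_AE:
  assumes "g \<in> borel_measurable lborel" "h \<in> borel_measurable lborel" "f \<in> borel_measurable lborel"
    and "AE y in lborel. g y = h y"
  shows "alpha_div g f \<alpha> = alpha_div h f \<alpha>"
  unfolding alpha_div_def using assms
  by (subst integral_cong_AE[where g="\<lambda>y. h y powr \<alpha> * f y powr (1 - \<alpha>)"]) (auto elim: AE_mp)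

lemma lfd_coincide_iff_common_element:
  assumes "f1 \<in> borel_measurable lborel"
  shows "lfd_coincide f0 f1 \<alpha> \<epsilon>0 \<epsilon>1 \<longleftrightarrow> unc_class f0 \<alpha> \<epsilon>0 \<inter> unc_class f1 \<alpha> \<epsilon>1 \<noteq> {}"
proof
  assume "lfd_coincide f0 f1 \<alpha> \<epsilon>0 \<epsilon>1"
  then obtain h0 h1 where h0: "h0 \<in> unc_class f0 \<alpha> \<epsilon>0" and h1: "h1 \<in> unc_class f1 \<alpha> \<epsilon>1"
    and "AE y in lborel. h0 y = h1 y"
    unfolding lfd_coincide_def least_favorable_def by blast
  then have "alpha_div h0 f1 \<alpha> = alpha_div h1 f1 \<alpha>"
    using assms by (intro alpha_div_cong_AE) (auto simp: unc_class_def densities_def)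
  then have "h0 \<in> unc_class f1 \<alpha> \<epsilon>1" using h0 h1 unfolding unc_class_def by simp
  with h0 show "unc_class f0 \<alpha> \<epsilon>0 \<inter> unc_class f1 \<alpha> \<epsilon>1 \<noteq> {}" by blast
next
  assume "unc_class f0 \<alpha> \<epsilon>0 \<inter> unc_class f1 \<alpha> \<epsilon>1 \<noteq> {}"
  then obtain g where "g \<in> unc_class f0 \<alpha> \<epsilon>0" "g \<in> unc_class f1 \<alpha> \<epsilon>1" by blast
  then have "least_favorable (unc_class f0 \<alpha> \<epsilon>0) (unc_class f1 \<alpha> \<epsilon>1) g g"
    by (intro least_favorable_diagonal) (auto simp: unc_class_def)
  then show "lfd_coincide f0 f1 \<alpha> \<epsilon>0 \<epsilon>1" unfolding lfd_coincide_def by blast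
qed

lemma lfd_coincide_mono:
  assumes "f1 \<in> borel_measurable lborel" "lfd_coincide f0 f1 \<alpha> \<epsilon>0 \<epsilon>1" "\<epsilon>0 \<le> \<epsilon>0'" "\<epsilon>1 \<le> \<epsilon>1'"
  shows "lfd_coincide f0 f1 \<alpha> \<epsilon>0' \<epsilon>1'"
  using assms unfolding lfd_coincide_iff_common_element[OF assms(1)] unc_class_def by fastforce

lemma lfd_coincide_half_geodesic:
  assumes f0: "f0 \<in> densities" and f1: "f1 \<in> densities"
    and distinct: "\<not> (AE y in lborel. f0 y = f1 y)"
    and t: "0 \<le> t" "t \<le> arccos (affinity f0 f1)"
  shows "lfd_coincide f0 f1 (1/2) (4 * (1 - cos t)) (4 * (1 - cos (arccos (affinity f0 f1) - t)))"
proof -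
  define \<theta> where "\<theta> = arccos (affinity f0 f1)"
  have cos_\<theta>: "cos \<theta> = affinity f0 f1" and "\<theta> \<le> pi/2"
    using arccos_affinity_bounds[OF f0 f1] unfolding \<theta>_def by simp_all
  have "0 < \<theta>"
    using arccos_less_arccos[of "affinity f0 f1" 1] affinity_nonneg[OF f0 f1]
      affinity_lt_1[OF f0 f1 distinct] unfolding \<theta>_def by simp
  with \<open>\<theta> \<le> pi/2\<close> have "0 < sin \<theta>" by (intro sin_gt_zero) auto
  define p where "p = sin (\<theta> - t) / sin \<theta>"
  define q where "q = sin t / sin \<theta>"
  have "0 \<le> p" "0 \<le> q"
    unfolding p_def q_def using \<open>0 < sin \<theta>\<close> \<open>\<theta> \<le> pi/2\<close> t pi_gt_zero
    by (auto intro!: divide_nonneg_pos sin_ge_zero simp: \<theta>_def)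
  note slerp = slerp_coefficients[of \<theta> t, folded p_def q_def, unfolded cos_\<theta>]
  define g where "g = (\<lambda>y. (p * sqrt (f0 y) + q * sqrt (f1 y))\<^sup>2)"
  have "g \<in> densities" "affinity g f0 = cos t" "affinity g f1 = cos (\<theta> - t)"
    using affinity_geodesic_density[OF f0 f1 \<open>0 \<le> p\<close> \<open>0 \<le> q\<close>] slerp \<open>0 < sin \<theta>\<close>
    unfolding g_def by auto
  then have "g \<in> unc_class f0 (1/2) (4 * (1 - cos t)) \<inter> unc_class f1 (1/2) (4 * (1 - cos (\<theta> - t)))"
    using unc_class_half_iff[OF f0] unc_class_half_iff[OF f1] by (simp add: field_simps)
  then show ?thesis
    unfolding \<theta>_def lfd_coincide_iff_common_element[OF densitiesD(1)[OF f1]] by blast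
qed

lemma lfd_coincide_half_angle_bound:
  assumes f0: "f0 \<in> densities" and f1: "f1 \<in> densities"
    and "lfd_coincide f0 f1 (1/2) \<epsilon>0 \<epsilon>1" "\<epsilon>0 \<le> 8" "\<epsilon>1 \<le> 8"
  shows "arccos (affinity f0 f1) \<le> arccos (1 - \<epsilon>0/4) + arccos (1 - \<epsilon>1/4)"
proof -
  obtain g where "g \<in> unc_class f0 (1/2) \<epsilon>0" "g \<in> unc_class f1 (1/2) \<epsilon>1"
    using assms(3) unfolding lfd_coincide_iff_common_element[OF densitiesD(1)[OF f1]] by blast
  then have g: "g \<in> densities" and "1 - \<epsilon>0/4 \<le> affinity g f0" "1 - \<epsilon>1/4 \<le> affinity g f1"
    using unc_class_half_iff[OF f0] unc_class_half_iff[OF f1] by auto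
  then have "arccos (affinity g f0) \<le> arccos (1 - \<epsilon>0/4)" "arccos (affinity g f1) \<le> arccos (1 - \<epsilon>1/4)"
    using affinity_le_1[OF g f0] affinity_le_1[OF g f1] assms(4,5) by (auto intro!: arccos_le_arccos)
  then show ?thesis using arccos_affinity_triangle[OF g f0 f1] by linarith
qed

lemma limiting_params_half_le:
  assumes f0: "f0 \<in> densities" and f1: "f1 \<in> densities"
    and distinct: "\<not> (AE y in lborel. f0 y = f1 y)"
    and lim: "limiting_params f0 f1 (1/2) \<epsilon>0 \<epsilon>1"
  shows "\<epsilon>0 \<le> 4 * (1 - affinity f0 f1)" "\<epsilon>1 \<le> 4 * (1 - affinity f0 f1)"
proof -
  define a where "a = affinity f0 f1"
  note mono = lfd_coincide_mono[OF densitiesD(1)[OF f1]]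
  have "0 \<le> \<epsilon>0" "0 \<le> \<epsilon>1" "lfd_coincide f0 f1 (1/2) \<epsilon>0 \<epsilon>1" and minimal:
    "\<And>e0 e1. 0 \<le> e0 \<Longrightarrow> e0 \<le> \<epsilon>0 \<Longrightarrow> 0 \<le> e1 \<Longrightarrow> e1 \<le> \<epsilon>1 \<Longrightarrow> (e0, e1) \<noteq> (\<epsilon>0, \<epsilon>1)
        \<Longrightarrow> \<not> lfd_coincide f0 f1 (1/2) e0 e1"
    using lim unfolding limiting_params_def by blast+
  have "a \<le> 1" and cos_arccos: "cos (arccos a) = a"
    using affinity_le_1[OF f0 f1] arccos_affinity_bounds[OF f0 f1] unfolding a_def by simp_all
  have "lfd_coincide f0 f1 (1/2) (4 * (1 - a)) 0" "lfd_coincide f0 f1 (1/2) 0 (4 * (1 - a))"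
    using lfd_coincide_half_geodesic[OF f0 f1 distinct, of "arccos a"]
      lfd_coincide_half_geodesic[OF f0 f1 distinct, of 0] arccos_affinity_bounds[OF f0 f1]
    unfolding a_def by (simp_all add: cos_arccos[unfolded a_def])
  then have "lfd_coincide f0 f1 (1/2) (4 * (1 - a)) \<epsilon>1" "lfd_coincide f0 f1 (1/2) \<epsilon>0 (4 * (1 - a))"
    using mono \<open>0 \<le> \<epsilon>0\<close> \<open>0 \<le> \<epsilon>1\<close> by auto
  then show "\<epsilon>0 \<le> 4 * (1 - affinity f0 f1)" "\<epsilon>1 \<le> 4 * (1 - affinity f0 f1)"
    using minimal[of "4 * (1 - a)" \<epsilon>1] minimal[of \<epsilon>0 "4 * (1 - a)"] \<open>a \<le> 1\<close> \<open>0 \<le> \<epsilon>0\<close> \<open>0 \<le> \<epsilon>1\<close>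
    unfolding a_def by force+
qed

text \<open>A limiting pair lies on the geodesic between \<open>f\<^sub>0\<close> and \<open>f\<^sub>1\<close>: if the two radii, measured
  as angles, added up to more than the angle between \<open>f\<^sub>0\<close> and \<open>f\<^sub>1\<close>, a point of the geodesic would
  witness coincidence for a strictly smaller pair.\<close>
lemma limiting_params_half_angle_sum:
  assumes f0: "f0 \<in> densities" and f1: "f1 \<in> densities"
    and distinct: "\<not> (AE y in lborel. f0 y = f1 y)"
    and lim: "limiting_params f0 f1 (1/2) \<epsilon>0 \<epsilon>1"
  shows "arccos (affinity f0 f1) = arccos (1 - \<epsilon>0/4) + arccos (1 - \<epsilon>1/4)"
proof (rule ccontr)
  define \<theta> where "\<theta> = arccos (affinity f0 f1)"
  define t0 where "t0 = arccos (1 - \<epsilon>0/4)"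
  define t1 where "t1 = arccos (1 - \<epsilon>1/4)"
  assume "\<theta> \<noteq> t0 + t1"
  have "0 \<le> \<epsilon>0" "0 \<le> \<epsilon>1" "lfd_coincide f0 f1 (1/2) \<epsilon>0 \<epsilon>1" and minimal:
    "\<And>e0 e1. 0 \<le> e0 \<Longrightarrow> e0 \<le> \<epsilon>0 \<Longrightarrow> 0 \<le> e1 \<Longrightarrow> e1 \<le> \<epsilon>1 \<Longrightarrow> (e0, e1) \<noteq> (\<epsilon>0, \<epsilon>1)
        \<Longrightarrow> \<not> lfd_coincide f0 f1 (1/2) e0 e1"
    using lim unfolding limiting_params_def by blast+
  have le: "\<epsilon>0 \<le> 4 * (1 - affinity f0 f1)" "\<epsilon>1 \<le> 4 * (1 - affinity f0 f1)"
    using limiting_params_half_le[OF assms] by simp_all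
  then have "\<epsilon>0 \<le> 8" "\<epsilon>1 \<le> 8" using affinity_nonneg[OF f0 f1] by simp_all
  have "\<theta> \<le> t0 + t1"
    using lfd_coincide_half_angle_bound[OF f0 f1 \<open>lfd_coincide f0 f1 (1/2) \<epsilon>0 \<epsilon>1\<close>]
      \<open>\<epsilon>0 \<le> 8\<close> \<open>\<epsilon>1 \<le> 8\<close> unfolding \<theta>_def t0_def t1_def by simp
  with \<open>\<theta> \<noteq> t0 + t1\<close> have "\<theta> < t0 + t1" by simp
  have "\<theta> \<le> pi/2" unfolding \<theta>_def using arccos_affinity_bounds[OF f0 f1] by simp
  have range0: "-1 \<le> 1 - \<epsilon>0/4" "1 - \<epsilon>0/4 \<le> 1" and range1: "-1 \<le> 1 - \<epsilon>1/4" "1 - \<epsilon>1/4 \<le> 1"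
    using \<open>0 \<le> \<epsilon>0\<close> \<open>0 \<le> \<epsilon>1\<close> \<open>\<epsilon>0 \<le> 8\<close> \<open>\<epsilon>1 \<le> 8\<close> by simp_all
  have cos_t0: "cos t0 = 1 - \<epsilon>0/4" and "0 \<le> t0" "t0 \<le> pi"
    unfolding t0_def using range0 by (simp_all add: arccos_lbound arccos_ubound)
  have cos_t1: "cos t1 = 1 - \<epsilon>1/4" and "0 \<le> t1" "t1 \<le> pi"
    unfolding t1_def using range1 by (simp_all add: arccos_lbound arccos_ubound)
  define t where "t = max 0 (\<theta> - t1)"
  have "0 \<le> \<theta>" unfolding \<theta>_def using arccos_affinity_bounds(1)[OF f0 f1] .
  have "0 \<le> t" "t \<le> \<theta>" "t \<le> t0" "\<theta> - t \<le> t1"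
    unfolding t_def using \<open>\<theta> < t0 + t1\<close> \<open>0 \<le> t0\<close> \<open>0 \<le> t1\<close> \<open>0 \<le> \<theta>\<close> by auto
  have "t \<le> pi" "0 \<le> \<theta> - t" "\<theta> - t \<le> pi"
    using \<open>0 \<le> t\<close> \<open>t \<le> \<theta>\<close> \<open>\<theta> \<le> pi/2\<close> pi_gt_zero by linarith+
  have "cos t0 \<le> cos t"
    using cos_mono_le_eq[of t0 t] \<open>0 \<le> t\<close> \<open>t \<le> pi\<close> \<open>0 \<le> t0\<close> \<open>t0 \<le> pi\<close> \<open>t \<le> t0\<close> by simp
  moreover have "cos t1 \<le> cos (\<theta> - t)"
    using cos_mono_le_eq[of t1 "\<theta> - t"] \<open>0 \<le> \<theta> - t\<close> \<open>\<theta> - t \<le> pi\<close> \<open>0 \<le> t1\<close> \<open>t1 \<le> pi\<close>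
      \<open>\<theta> - t \<le> t1\<close> by simp
  moreover have "(4 * (1 - cos t), 4 * (1 - cos (\<theta> - t))) \<noteq> (\<epsilon>0, \<epsilon>1)"
  proof
    assume "(4 * (1 - cos t), 4 * (1 - cos (\<theta> - t))) = (\<epsilon>0, \<epsilon>1)"
    then have "cos t = cos t0" "cos (\<theta> - t) = cos t1" using cos_t0 cos_t1 by auto
    then have "t = t0" "\<theta> - t = t1"
      using arccos_cos[OF \<open>0 \<le> t\<close> \<open>t \<le> pi\<close>] arccos_cos[OF \<open>0 \<le> t0\<close> \<open>t0 \<le> pi\<close>]
        arccos_cos[OF \<open>0 \<le> \<theta> - t\<close> \<open>\<theta> - t \<le> pi\<close>] arccos_cos[OF \<open>0 \<le> t1\<close> \<open>t1 \<le> pi\<close>]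
      by metis+
    with \<open>\<theta> < t0 + t1\<close> show False by simp
  qed
  ultimately have "\<not> lfd_coincide f0 f1 (1/2) (4 * (1 - cos t)) (4 * (1 - cos (\<theta> - t)))"
    using cos_t0 cos_t1 by (intro minimal) auto
  then show False
    using lfd_coincide_half_geodesic[OF f0 f1 distinct \<open>0 \<le> t\<close>] \<open>t \<le> \<theta>\<close> unfolding \<theta>_def by simp
qed

lemma limiting_params_half_affinity:
  assumes f0: "f0 \<in> densities" and f1: "f1 \<in> densities"
    and distinct: "\<not> (AE y in lborel. f0 y = f1 y)"
    and lim: "limiting_params f0 f1 (1/2) \<epsilon>0 \<epsilon>1"
  shows "affinity f0 f1
           = (1 - \<epsilon>0/4) * (1 - \<epsilon>1/4) - sqrt (1 - (1 - \<epsilon>0/4)\<^sup>2) * sqrt (1 - (1 - \<epsilon>1/4)\<^sup>2)"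
proof -
  have "0 \<le> \<epsilon>0" "0 \<le> \<epsilon>1" using lim unfolding limiting_params_def by simp_all
  moreover have "\<epsilon>0 \<le> 4" "\<epsilon>1 \<le> 4"
    using limiting_params_half_le[OF assms] affinity_nonneg[OF f0 f1] by simp_all
  ultimately have "cos (arccos (1 - \<epsilon>0/4) + arccos (1 - \<epsilon>1/4))
      = (1 - \<epsilon>0/4) * (1 - \<epsilon>1/4) - sqrt (1 - (1 - \<epsilon>0/4)\<^sup>2) * sqrt (1 - (1 - \<epsilon>1/4)\<^sup>2)"
    by (simp add: cos_add sin_arccos)
  then show ?thesis
    using limiting_params_half_angle_sum[OF assms] arccos_affinity_bounds(3)[OF f0 f1] by simp
qed

theorem mainTheorem3:
  fixes f0 f1 :: "real \<Rightarrow> real"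
  assumes "f0 \<in> densities" and "f1 \<in> densities"
    and "\<not> (AE y in lborel. f0 y = f1 y)"
    and "(INF y\<in>supp2 f0 f1. lik_ratio f0 f1 y) = 0"
    and "(SUP y\<in>supp2 f0 f1. lik_ratio f0 f1 y) = \<infinity>"
  defines "a \<equiv> LINT y|lborel. sqrt (f0 y * f1 y)"
  shows "(\<forall>\<epsilon>0 \<epsilon>1. limiting_params f0 f1 (1/2) \<epsilon>0 \<epsilon>1 \<longrightarrow>
            a = 1/16 * (16 - 4 * \<epsilon>1 + \<epsilon>0 * (\<epsilon>1 - 4)
                        - sqrt ((\<epsilon>0 - 8) * \<epsilon>0 * (\<epsilon>1 - 8) * \<epsilon>1)))
       \<and> (\<forall>\<epsilon>. limiting_params f0 f1 (1/2) \<epsilon> \<epsilon> \<longrightarrow> \<epsilon> = 4 - 2 * sqrt (2 * (1 + a)))"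
proof -
  note affinity_eq = limiting_params_half_affinity[OF assms(1-3)]
  have a: "a = affinity f0 f1" unfolding a_def affinity_def by (simp add: real_sqrt_mult)
  have "a = 1/16 * (16 - 4 * \<epsilon>1 + \<epsilon>0 * (\<epsilon>1 - 4) - sqrt ((\<epsilon>0 - 8) * \<epsilon>0 * (\<epsilon>1 - 8) * \<epsilon>1))"
    if "limiting_params f0 f1 (1/2) \<epsilon>0 \<epsilon>1" for \<epsilon>0 \<epsilon>1
  proof -
    have "sqrt (1 - (1 - \<epsilon>0/4)\<^sup>2) * sqrt (1 - (1 - \<epsilon>1/4)\<^sup>2)
        = sqrt ((\<epsilon>0 - 8) * \<epsilon>0 * (\<epsilon>1 - 8) * \<epsilon>1 / 16\<^sup>2)"
      unfolding real_sqrt_mult[symmetric] by (simp add: power2_eq_square field_simps)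
    then show ?thesis using affinity_eq[OF that] a by (simp add: real_sqrt_divide field_simps)
  qed
  moreover have "\<epsilon> = 4 - 2 * sqrt (2 * (1 + a))" if "limiting_params f0 f1 (1/2) \<epsilon> \<epsilon>" for \<epsilon>
  proof -
    define k where "k = 1 - \<epsilon>/4"
    have "0 \<le> k" "k \<le> 1"
      using that limiting_params_half_le[OF assms(1-3) that] affinity_nonneg[OF assms(1,2)]
      unfolding k_def limiting_params_def by simp_all
    then have "k * k \<le> 1" by (simp add: mult_le_one)
    then have "2 * (1 + a) = (2 * k)\<^sup>2"
      using affinity_eq[OF that] a unfolding k_def[symmetric] by (simp add: power2_eq_square)
    with \<open>0 \<le> k\<close> show ?thesis unfolding k_def by simp
  qed
  ultimately show ?thesis by blast
qed

end
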